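(* Let $d\ge1$ and $n\ge3$ be integers and let $\mathcal{L}$ be the FTCS operator with parameter $r=1/(2d)$, i.e. $(\mathcal{L}v)(\mathbf{k})=\frac{1}{2d}\sum_{i=1}^d\big(v(\mathbf{k}+\mathbf{e}_i)+v(\mathbf{k}-\mathbf{e}_i)\big)$ for $v\in\mathbb{R}^{\mathbb{Z}_n^d}$ (indices mod $n$). Then for every entrywise nonnegative nonzero vector $\mathbf{u}\in\mathbb{R}^{\mathbb{Z}_n^d}$, $$\frac{\|\mathcal{L}\mathbf{u}\|_2^2}{\|\mathbf{u}\|_2^2}\ge\frac{1}{2d}.$$
   Context: This is the FTCS operator $\mathcal{L}=I_n^{\otimes d}+r\sum_j I_n^{\otimes(j-1)}\otimes H\otimes I_n^{\otimes(d-j)}$ ($H$ the $n\times n$ circulant with $-2$ on the diagonal and $1$ on the cyclic off-diagonals) in the case $r=\alpha\Delta t/\Delta x^2=1/(2d)$, i.e. $\Delta t=\Delta x^2/(2d\alpha)$. $\mathbf{e}_i$ is the $i$-th unit vector of $\mathbb{Z}_n^d$. *)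

theory Defs
  imports "HOL-Analysis.Analysis" "HOL-Library.FuncSet"
begin

text \<open>The discrete torus Z_n^d: index vectors k with k i in {0..<n} for i < d
  (coordinates 0..d-1 correspond to the paper's 1..d), extensional outside.\<close>
definition grid :: "nat \<Rightarrow> nat \<Rightarrow> (nat \<Rightarrow> nat) set" where
  "grid d n = PiE {0..<d} (\<lambda>_. {0..<n})"

definition shift_plus :: "nat \<Rightarrow> nat \<Rightarrow> (nat \<Rightarrow> nat) \<Rightarrow> (nat \<Rightarrow> nat)" where
  "shift_plus n i k = k(i := (k i + 1) mod n)"

definition shift_minus :: "nat \<Rightarrow> nat \<Rightarrow> (nat \<Rightarrow> nat) \<Rightarrow> (nat \<Rightarrow> nat)" where
  "shift_minus n i k = k(i := (k i + n - 1) mod n)"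

definition ftcs :: "nat \<Rightarrow> nat \<Rightarrow> ((nat \<Rightarrow> nat) \<Rightarrow> real) \<Rightarrow> ((nat \<Rightarrow> nat) \<Rightarrow> real)" where
  "ftcs d n v = (\<lambda>k. (1 / (2 * real d)) *
      (\<Sum>i<d. v (shift_plus n i k) + v (shift_minus n i k)))"

definition sqnorm :: "nat \<Rightarrow> nat \<Rightarrow> ((nat \<Rightarrow> nat) \<Rightarrow> real) \<Rightarrow> real" where
  "sqnorm d n v = (\<Sum>k\<in>grid d n. (v k)^2)"

end

theory Submission
  imports Defs
begin

(* For nonnegative reals the square of a sum dominates the sum of the squares, so
   (L u)(k)^2 >= (1/(2d))^2 * sum_i (u(k+e_i)^2 + u(k-e_i)^2) whenever u >= 0.  Summing over k,
   each shift k |-> k +- e_i permutes the torus, so each of the 2d inner sums contributes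
   ||u||^2, and altogether ||L u||^2 >= (1/(2d))^2 * 2d * ||u||^2 = ||u||^2 / (2d). *)

lemma sum_power2_le_power2_sum:
  fixes f :: "'a \<Rightarrow> 'b::linordered_semidom"
  assumes "\<And>i. i \<in> I \<Longrightarrow> 0 \<le> f i"
  shows "(\<Sum>i\<in>I. (f i)^2) \<le> (\<Sum>i\<in>I. f i)^2"
  using assms
proof (induction I rule: infinite_finite_induct)
  case (insert x F)
  have "0 \<le> 2 * f x * sum f F" using insert by (simp add: sum_nonneg)
  with insert show ?case by (simp add: power2_sum add_increasing2)
qed auto

lemma mod_pred_of_succ: "(a::nat) < n \<Longrightarrow> ((a + 1) mod n + n - 1) mod n = a"
  by (cases "a + 1 = n") auto

lemma mod_succ_of_pred: "(a::nat) < n \<Longrightarrow> ((a + n - 1) mod n + 1) mod n = a"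
  by (cases a) (auto simp: mod_if)

lemma finite_grid: "finite (grid d n)"
  unfolding grid_def by (intro finite_PiE) auto

lemma grid_coordinate_less: "k \<in> grid d n \<Longrightarrow> i < d \<Longrightarrow> k i < n"
  unfolding grid_def by auto

lemma shift_plus_in_grid:
  assumes "k \<in> grid d n" "i < d"
  shows "shift_plus n i k \<in> grid d n"
proof -
  have "0 < n" using grid_coordinate_less[OF assms] by linarith
  with assms show ?thesis
    unfolding grid_def shift_plus_def by (auto simp: PiE_iff extensional_def)
qed

lemma shift_minus_in_grid:
  assumes "k \<in> grid d n" "i < d"
  shows "shift_minus n i k \<in> grid d n"
proof -
  have "0 < n" using grid_coordinate_less[OF assms] by linarith
  with assms show ?thesis
    unfolding grid_def shift_minus_def by (auto simp: PiE_iff extensional_def)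
qed

lemma shift_minus_shift_plus:
  assumes "k \<in> grid d n" "i < d"
  shows "shift_minus n i (shift_plus n i k) = k"
  unfolding shift_minus_def shift_plus_def
  using mod_pred_of_succ[OF grid_coordinate_less[OF assms]] by simp

lemma shift_plus_shift_minus:
  assumes "k \<in> grid d n" "i < d"
  shows "shift_plus n i (shift_minus n i k) = k"
  unfolding shift_minus_def shift_plus_def
  using mod_succ_of_pred[OF grid_coordinate_less[OF assms]] by simp

lemma bij_betw_shift_plus: "i < d \<Longrightarrow> bij_betw (shift_plus n i) (grid d n) (grid d n)"
  by (rule bij_betw_byWitness[where f' = "shift_minus n i"])
    (auto simp: shift_minus_shift_plus shift_plus_shift_minus
      shift_plus_in_grid shift_minus_in_grid)

lemma bij_betw_shift_minus: "i < d \<Longrightarrow> bij_betw (shift_minus n i) (grid d n) (grid d n)"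
  by (rule bij_betw_byWitness[where f' = "shift_plus n i"])
    (auto simp: shift_minus_shift_plus shift_plus_shift_minus
      shift_plus_in_grid shift_minus_in_grid)

lemma sum_grid_shift_plus:
  "i < d \<Longrightarrow> (\<Sum>k\<in>grid d n. f (shift_plus n i k)) = (\<Sum>k\<in>grid d n. f k)"
  using sum.reindex_bij_betw[OF bij_betw_shift_plus] by blast

lemma sum_grid_shift_minus:
  "i < d \<Longrightarrow> (\<Sum>k\<in>grid d n. f (shift_minus n i k)) = (\<Sum>k\<in>grid d n. f k)"
  using sum.reindex_bij_betw[OF bij_betw_shift_minus] by blast

lemma ftcs_power2_ge:
  assumes nonneg: "\<forall>k\<in>grid d n. u k \<ge> 0" and k: "k \<in> grid d n"
  shows "(1 / (2 * real d))^2 * (\<Sum>i<d. (u (shift_plus n i k))^2 + (u (shift_minus n i k))^2)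
    \<le> (ftcs d n u k)^2"
proof -
  have nonneg_shifts: "0 \<le> u (shift_plus n i k)" "0 \<le> u (shift_minus n i k)" if "i < d" for i
    using nonneg shift_plus_in_grid[OF k that] shift_minus_in_grid[OF k that] by auto
  have "(\<Sum>i<d. (u (shift_plus n i k))^2 + (u (shift_minus n i k))^2)
      \<le> (\<Sum>i<d. (u (shift_plus n i k) + u (shift_minus n i k))^2)"
    by (intro sum_mono) (simp add: power2_sum nonneg_shifts)
  also have "\<dots> \<le> (\<Sum>i<d. u (shift_plus n i k) + u (shift_minus n i k))^2"
    by (intro sum_power2_le_power2_sum) (simp add: nonneg_shifts)
  finally show ?thesis
    unfolding ftcs_def power_mult_distrib by (intro mult_left_mono) auto
qed

lemma sqnorm_ftcs_ge:
  assumes "0 < d" and nonneg: "\<forall>k\<in>grid d n. u k \<ge> 0"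
  shows "sqnorm d n u / (2 * real d) \<le> sqnorm d n (ftcs d n u)"
proof -
  let ?G = "grid d n" and ?c = "(1 / (2 * real d))^2"
  have "sqnorm d n u / (2 * real d) = ?c * (\<Sum>i<d. 2 * sqnorm d n u)"
    using assms(1) by (simp add: power2_eq_square)
  also have "\<dots> = ?c * (\<Sum>i<d. \<Sum>k\<in>?G. (u (shift_plus n i k))^2 + (u (shift_minus n i k))^2)"
    unfolding sum.distrib sqnorm_def
    by (simp add: sum_grid_shift_plus[where f = "\<lambda>k. (u k)^2"]
        sum_grid_shift_minus[where f = "\<lambda>k. (u k)^2"])
  also have "\<dots> = (\<Sum>k\<in>?G. ?c * (\<Sum>i<d. (u (shift_plus n i k))^2 + (u (shift_minus n i k))^2))"
    by (simp add: sum.swap[where A = "{..<d}"] sum_distrib_left)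
  also have "\<dots> \<le> sqnorm d n (ftcs d n u)"
    unfolding sqnorm_def by (intro sum_mono ftcs_power2_ge[OF nonneg])
  finally show ?thesis .
qed

lemma sqnorm_pos: "\<exists>k\<in>grid d n. u k \<noteq> 0 \<Longrightarrow> 0 < sqnorm d n u"
  unfolding sqnorm_def by (auto intro: sum_pos2 finite_grid)

theorem mainTheorem4:
  fixes d n :: nat and u :: "(nat \<Rightarrow> nat) \<Rightarrow> real"
  assumes "d \<ge> 1" and "n \<ge> 3"
    and "\<forall>k\<in>grid d n. u k \<ge> 0"
    and "\<exists>k\<in>grid d n. u k \<noteq> 0"
  shows "sqnorm d n (ftcs d n u) / sqnorm d n u \<ge> 1 / (2 * real d)"
proof -
  have "sqnorm d n u / (2 * real d) \<le> sqnorm d n (ftcs d n u)"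
    using assms(1,3) by (intro sqnorm_ftcs_ge) auto
  moreover have "0 < sqnorm d n u"
    using assms(4) by (rule sqnorm_pos)
  ultimately show ?thesis
    by (simp add: field_simps)
qed

end
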